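(* Let $G$ be a complete geometric graph and let $B$ be a blocker for $\mathcal{T}_{\leq 4}(G)$. Let $b$ be a boundary vertex of $G$, and let $[a,b]$ and $[b,c]$ be the two boundary edges of $G$ containing $b$. If at least one of $[a,b]$, $[b,c]$ is not in $B$, then $b$ is a leaf of $B$ (i.e., has degree exactly 1 in $B$).
   Context: A geometric graph is a graph whose vertices are points in the plane in general position (no three collinear) and whose edges are straight segments between pairs of vertices; $G$ is complete if all pairs of vertices are joined. Boundary vertices and boundary edges of $G$ are those lying on the boundary of the convex hull of $V(G)$. $\mathcal{T}_{\leq k}(G)$ denotes the family of all simple (non-crossing) spanning trees of $G$ of (graph) diameter at most $k$. A subgraph $B$ blocks a family $\mathcal{F}$ of subgraphs if it shares at least one edge with every member of $\mathcal{F}$; a blocker of $\mathcal{F}$ is a subgraph that blocks $\mathcal{F}$ and has the smallest possible number of edges among all subgraphs blocking $\mathcal{F}$. *)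

theory Defs
  imports "HOL-Analysis.Analysis"
begin

type_synonym pt = "real^2"

text \<open>Edges of a geometric graph are 2-element sets of points; the edge {p,q} is drawn as the
  segment convex hull {p,q} = closed_segment p q.\<close>

definition general_position :: "pt set \<Rightarrow> bool" where
  "general_position V \<longleftrightarrow>
     (\<forall>p\<in>V. \<forall>q\<in>V. \<forall>r\<in>V. p \<noteq> q \<and> q \<noteq> r \<and> p \<noteq> r \<longrightarrow> \<not> collinear {p, q, r})"

definition complete_edges :: "pt set \<Rightarrow> pt set set" where
  "complete_edges V = {{p, q} | p q. p \<in> V \<and> q \<in> V \<and> p \<noteq> q}"

definition boundary_vertex :: "pt set \<Rightarrow> pt \<Rightarrow> bool" where
  "boundary_vertex V v \<longleftrightarrow> v \<in> V \<and> v \<in> frontier (convex hull V)"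

definition boundary_edge :: "pt set \<Rightarrow> pt \<Rightarrow> pt \<Rightarrow> bool" where
  "boundary_edge V p q \<longleftrightarrow> p \<in> V \<and> q \<in> V \<and> p \<noteq> q \<and>
     closed_segment p q \<subseteq> frontier (convex hull V)"

definition walk :: "pt set set \<Rightarrow> pt list \<Rightarrow> bool" where
  "walk T xs \<longleftrightarrow> xs \<noteq> [] \<and> (\<forall>i. Suc i < length xs \<longrightarrow> {xs ! i, xs ! Suc i} \<in> T)"

definition reach_within :: "pt set set \<Rightarrow> nat \<Rightarrow> pt \<Rightarrow> pt \<Rightarrow> bool" where
  "reach_within T k u v \<longleftrightarrow>
     (\<exists>xs. walk T xs \<and> hd xs = u \<and> last xs = v \<and> length xs \<le> Suc k)"

definition graph_connected :: "pt set \<Rightarrow> pt set set \<Rightarrow> bool" where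
  "graph_connected V T \<longleftrightarrow> (\<forall>u\<in>V. \<forall>v\<in>V. \<exists>k. reach_within T k u v)"

definition spanning_tree :: "pt set \<Rightarrow> pt set set \<Rightarrow> bool" where
  "spanning_tree V T \<longleftrightarrow> T \<subseteq> complete_edges V \<and> graph_connected V T \<and> card T = card V - 1"

definition noncrossing :: "pt set set \<Rightarrow> bool" where
  "noncrossing T \<longleftrightarrow> (\<forall>e\<in>T. \<forall>f\<in>T. e \<noteq> f \<longrightarrow> convex hull e \<inter> convex hull f \<subseteq> e \<inter> f)"

definition diam_le :: "pt set \<Rightarrow> pt set set \<Rightarrow> nat \<Rightarrow> bool" where
  "diam_le V T k \<longleftrightarrow> (\<forall>u\<in>V. \<forall>v\<in>V. reach_within T k u v)"

definition trees_le :: "pt set \<Rightarrow> nat \<Rightarrow> pt set set set" where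
  "trees_le V k = {T. spanning_tree V T \<and> noncrossing T \<and> diam_le V T k}"

definition blocks :: "pt set set \<Rightarrow> pt set set set \<Rightarrow> bool" where
  "blocks B F \<longleftrightarrow> (\<forall>T\<in>F. B \<inter> T \<noteq> {})"

definition is_blocker :: "pt set \<Rightarrow> pt set set set \<Rightarrow> pt set set \<Rightarrow> bool" where
  "is_blocker V F B \<longleftrightarrow> B \<subseteq> complete_edges V \<and> blocks B F \<and>
     (\<forall>B'. B' \<subseteq> complete_edges V \<and> blocks B' F \<longrightarrow> card B \<le> card B')"

definition degree :: "pt set set \<Rightarrow> pt \<Rightarrow> nat" where
  "degree B v = card {e \<in> B. v \<in> e}"

end

theory Submission
  imports Defs
begin

text \<open>Every spanning tree has an edge at \<open>b\<close>, so the star at \<open>b\<close>, a simple spanning tree of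
  diameter 2, shows that a blocker \<open>B\<close> has at most \<open>n - 1\<close> edges and at least one edge at \<open>b\<close>.
  Suppose \<open>[a, b] \<notin> B\<close> but \<open>b\<close> has two edges in \<open>B\<close>. At most \<open>n - 3\<close> edges of \<open>B\<close> avoid \<open>b\<close>,
  so some set \<open>D \<noteq> {}\<close> of vertices other than \<open>a, b\<close> is unreachable from \<open>a\<close> along them.
  The vertices other than \<open>a, b\<close> lie strictly on one side of the boundary edge \<open>ab\<close>, hence are
  linearly ordered by angle around \<open>a\<close>. Joining \<open>a\<close> to \<open>b\<close> and to all of \<open>D\<close>, and every other
  vertex to the next vertex of \<open>D\<close> in this order (or to the last one), gives a simple spanning tree
  of diameter at most 4 whose edges other than \<open>ab\<close> all leave the component of \<open>a\<close>; it avoids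
  \<open>B\<close>, a contradiction.\<close>

definition det2 :: "pt \<Rightarrow> pt \<Rightarrow> real" where
  "det2 u v = u$1 * v$2 - u$2 * v$1"

lemma det2_antisym: "det2 u v = - det2 v u"
  unfolding det2_def by simp

lemma det2_self [simp]: "det2 u u = 0"
  and det2_zero_right [simp]: "det2 u 0 = 0"
  unfolding det2_def by simp_all

lemma det2_affine_right:
  "det2 w ((1 - t) *\<^sub>R p + t *\<^sub>R q - a) = (1 - t) * det2 w (p - a) + t * det2 w (q - a)"
  unfolding det2_def by (simp add: algebra_simps)

lemma det2_cyclic_sum:
  "det2 u v * det2 e w + det2 v w * det2 e u + det2 w u * det2 e v = 0"
  unfolding det2_def by (simp add: algebra_simps)

lemma det2_mult_det2:
  "det2 e l * det2 e z = (e \<bullet> e) * (l \<bullet> z) - (l \<bullet> e) * (e \<bullet> z)"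
  unfolding det2_def by (simp add: inner_vec_def sum_2 algebra_simps)

lemma inner_self_mult_det2:
  "(l \<bullet> l) * det2 e z = (l \<bullet> e) * det2 l z - (l \<bullet> z) * det2 l e"
  unfolding det2_def by (simp add: inner_vec_def sum_2 algebra_simps)

lemma det2_eq_0_imp_scaleR:
  assumes "det2 x y = 0" "x \<noteq> 0"
  obtains c where "y = c *\<^sub>R x"
proof -
  have "x$1 \<noteq> 0 \<or> x$2 \<noteq> 0"
    using assms(2) by (auto simp: vec_eq_iff forall_2)
  then show thesis
  proof
    assume "x$1 \<noteq> 0"
    then have "y$2 = (y$1 / x$1) * x$2" "y$1 = (y$1 / x$1) * x$1"
      using assms(1) unfolding det2_def by (simp_all add: field_simps)
    then show thesis
      by (intro that[of "y$1 / x$1"]) (simp add: vec_eq_iff forall_2)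
  next
    assume "x$2 \<noteq> 0"
    then have "y$1 = (y$2 / x$2) * x$1" "y$2 = (y$2 / x$2) * x$2"
      using assms(1) unfolding det2_def by (simp_all add: field_simps)
    then show thesis
      by (intro that[of "y$2 / x$2"]) (simp add: vec_eq_iff forall_2)
  qed
qed

lemma collinear_if_det2_eq_0:
  fixes p q r :: pt
  assumes "det2 (q - p) (r - p) = 0"
  shows "collinear {p, q, r}"
proof -
  have "collinear {0, q - p, r - p}"
  proof (cases "q - p = 0")
    case False
    then obtain c where "r - p = c *\<^sub>R (q - p)"
      using det2_eq_0_imp_scaleR[OF assms] by blast
    then show ?thesis
      unfolding collinear_lemma by blast
  qed (simp add: collinear_lemma)
  then have "collinear {q, p, r}"
    using collinear_3[of q p r] by simp
  then show ?thesis
    by (simp add: insert_commute)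
qed

lemma general_position_noncollinear:
  assumes "general_position V" "p \<in> V" "q \<in> V" "r \<in> V" "p \<noteq> q" "q \<noteq> r" "p \<noteq> r"
  shows "\<not> collinear {p, q, r}"
  using assms unfolding general_position_def by blast

lemma closed_segment_Int_common_endpoint:
  fixes p q r :: pt
  assumes "\<not> collinear {p, q, r}"
  shows "closed_segment p q \<inter> closed_segment p r = {p}"
proof -
  have nz: "det2 (q - p) (r - p) \<noteq> 0"
    using assms collinear_if_det2_eq_0 by blast
  have "z = p" if zq: "z \<in> closed_segment p q" and zr: "z \<in> closed_segment p r" for z
  proof -
    obtain s where s: "z = (1 - s) *\<^sub>R p + s *\<^sub>R q"
      using zq unfolding in_segment(1) by blast
    obtain t where t: "z = (1 - t) *\<^sub>R p + t *\<^sub>R r"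
      using zr unfolding in_segment(1) by blast
    have "det2 (q - p) (z - p) = 0"
      using det2_affine_right[of "q - p" s p q p] s by simp
    moreover have "det2 (q - p) (z - p) = t * det2 (q - p) (r - p)"
      using det2_affine_right[of "q - p" t p r p] t by simp
    ultimately have "t = 0"
      using nz by simp
    then show ?thesis using t by simp
  qed
  then show ?thesis
    using ends_in_segment(1) by blast
qed

section \<open>Walks and reachability\<close>

lemma walk_Cons:
  assumes "xs \<noteq> []"
  shows "walk T (x # xs) \<longleftrightarrow> walk T xs \<and> {x, hd xs} \<in> T"
proof
  assume w: "walk T (x # xs)"
  have "{(x # xs) ! 0, (x # xs) ! Suc 0} \<in> T"
    using w assms unfolding walk_def by auto
  moreover have "walk T xs"
    using w assms unfolding walk_def by (metis Suc_less_eq length_Cons nth_Cons_Suc)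
  ultimately show "walk T xs \<and> {x, hd xs} \<in> T"
    using assms by (simp add: hd_conv_nth)
next
  assume "walk T xs \<and> {x, hd xs} \<in> T"
  then show "walk T (x # xs)"
    using assms unfolding walk_def by (auto simp: hd_conv_nth nth_Cons split: nat.split)
qed

lemma walk_append:
  assumes "walk T xs" "walk T ys" "last xs = hd ys"
  shows "walk T (xs @ tl ys)"
  using assms
proof (induction xs)
  case (Cons x xs)
  show ?case
  proof (cases "xs = []")
    case True
    then show ?thesis
      using Cons.prems by (cases ys) (auto simp: walk_def)
  next
    case False
    then have "walk T xs" "{x, hd xs} \<in> T"
      using Cons.prems(1) walk_Cons by auto
    then show ?thesis
      using Cons.IH Cons.prems(2,3) False walk_Cons[of "xs @ tl ys"] by simp
  qed
qed (simp add: walk_def)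

lemma walk_rev:
  assumes "walk T xs"
  shows "walk T (rev xs)"
  unfolding walk_def
proof (intro conjI allI impI)
  show "rev xs \<noteq> []"
    using assms by (simp add: walk_def)
  fix i
  assume i: "Suc i < length (rev xs)"
  define j where "j = length xs - Suc (Suc i)"
  have "Suc j < length xs" "rev xs ! i = xs ! Suc j" "rev xs ! Suc i = xs ! j"
    using i unfolding j_def by (auto simp: rev_nth Suc_diff_Suc)
  then show "{rev xs ! i, rev xs ! Suc i} \<in> T"
    using assms unfolding walk_def by (metis insert_commute)
qed

lemma walk_butlast:
  assumes "walk T xs" "length xs \<ge> 2"
  shows "walk T (butlast xs)"
  unfolding walk_def
proof (intro conjI allI impI)
  show "butlast xs \<noteq> []"
    using assms(2) by (cases xs) auto
  fix i
  assume "Suc i < length (butlast xs)"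
  then show "{butlast xs ! i, butlast xs ! Suc i} \<in> T"
    using assms(1) unfolding walk_def by (simp add: nth_butlast)
qed

lemma walk_last_edge:
  assumes "walk T xs" "length xs \<ge> 2"
  shows "{last (butlast xs), last xs} \<in> T"
proof -
  have "butlast xs \<noteq> []" "length (butlast xs) = length xs - 1"
    using assms(2) by (cases xs; auto)+
  then have "xs ! (length xs - 2) = last (butlast xs)"
    using assms(2) by (simp add: last_conv_nth nth_butlast numeral_2_eq_2)
  moreover have "xs ! Suc (length xs - 2) = last xs"
  proof -
    have "xs \<noteq> []" "Suc (length xs - 2) = length xs - 1"
      using assms(2) by auto
    then show ?thesis
      by (simp add: last_conv_nth)
  qed
  moreover have "{xs ! (length xs - 2), xs ! Suc (length xs - 2)} \<in> T"
    using assms unfolding walk_def by simp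
  ultimately show ?thesis
    by simp
qed

lemma reach_within_refl: "reach_within T k u u"
  unfolding reach_within_def by (rule exI[of _ "[u]"]) (simp add: walk_def)

lemma reach_within_edge: "{u, v} \<in> T \<Longrightarrow> reach_within T 1 u v"
  unfolding reach_within_def by (rule exI[of _ "[u, v]"]) (simp add: walk_def)

lemma reach_within_mono: "reach_within T k u v \<Longrightarrow> k \<le> m \<Longrightarrow> reach_within T m u v"
  unfolding reach_within_def by force

lemma reach_within_sym: "reach_within T k u v \<Longrightarrow> reach_within T k v u"
  unfolding reach_within_def by (metis hd_rev last_rev length_rev walk_rev)

lemma reach_within_trans:
  assumes "reach_within T k u w" "reach_within T m w v"
  shows "reach_within T (k + m) u v"
proof -
  obtain xs where xs: "walk T xs" "hd xs = u" "last xs = w" "length xs \<le> Suc k"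
    using assms(1) unfolding reach_within_def by blast
  obtain ys where ys: "walk T ys" "hd ys = w" "last ys = v" "length ys \<le> Suc m"
    using assms(2) unfolding reach_within_def by blast
  have ne: "xs \<noteq> []" "ys \<noteq> []"
    using xs ys by (auto simp: walk_def)
  have "last (xs @ tl ys) = v"
    using xs(3) ys(2,3) ne by (cases ys) auto
  moreover have "walk T (xs @ tl ys)" "hd (xs @ tl ys) = u" "length (xs @ tl ys) \<le> Suc (k + m)"
    using walk_append xs ys ne by auto
  ultimately show ?thesis
    unfolding reach_within_def by blast
qed

lemma reach_within_last_edge:
  assumes "reach_within T k u v" "u \<noteq> v"
  obtains w where "1 \<le> k" "reach_within T (k - 1) u w" "{w, v} \<in> T"
proof -
  obtain xs where xs: "walk T xs" "hd xs = u" "last xs = v" "length xs \<le> Suc k"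
    using assms(1) unfolding reach_within_def by blast
  have len: "length xs \<ge> 2"
  proof (rule ccontr)
    assume "\<not> 2 \<le> length xs"
    moreover have "xs \<noteq> []"
      using xs(1) by (simp add: walk_def)
    ultimately have "xs = [hd xs]"
      by (cases xs) (auto simp: not_le less_Suc_eq_0_disj)
    then show False
      using xs(2,3) assms(2) by (metis last.simps)
  qed
  define w where "w = last (butlast xs)"
  have edge: "{w, v} \<in> T"
    using walk_last_edge[OF xs(1) len] xs(3) by (simp add: w_def)
  have reach: "reach_within T (k - 1) u w"
    unfolding reach_within_def
  proof (intro exI conjI)
    show "walk T (butlast xs)" "last (butlast xs) = w"
      using walk_butlast[OF xs(1) len] by (simp_all add: w_def)
    show "hd (butlast xs) = u"
      using len xs(2) by (cases xs) auto
    show "length (butlast xs) \<le> Suc (k - 1)"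
      using xs(4) by simp
  qed
  have "1 \<le> k"
    using xs(4) len by simp
  then show thesis
    using that reach edge by blast
qed

lemma inj_on_edge_to_parent:
  assumes "\<And>v. v \<in> S \<Longrightarrow> p v \<in> S \<Longrightarrow> p (p v) \<noteq> v"
  shows "inj_on (\<lambda>v. {v, p v}) S"
proof (rule inj_onI)
  fix u v
  assume u: "u \<in> S" and v: "v \<in> S" and eq: "{u, p u} = {v, p v}"
  show "u = v"
  proof (rule ccontr)
    assume "u \<noteq> v"
    then have "u = p v" "p u = v"
      using eq unfolding doubleton_eq_iff by blast+
    then show False
      using assms[OF v] u by simp
  qed
qed

text \<open>Each reachable vertex other than \<open>a\<close> is sent to the last edge of a shortest walk to it;
  these edges are distinct because the distance strictly decreases along them.\<close>

lemma card_reachable_le: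
  assumes "finite E" and "\<And>e. e \<in> E \<Longrightarrow> finite e"
  shows "finite {v. \<exists>k. reach_within E k a v}" and "card {v. \<exists>k. reach_within E k a v} \<le> card E + 1"
proof -
  define R where "R = {v. \<exists>k. reach_within E k a v}"
  define dist where "dist v = (LEAST k. reach_within E k a v)" for v
  have dist: "reach_within E (dist v) a v" if "v \<in> R" for v
    using that unfolding R_def dist_def by (auto intro: LeastI)
  define parent where "parent v = (SOME w. {w, v} \<in> E \<and> dist w < dist v)" for v
  have parent: "{parent v, v} \<in> E \<and> dist (parent v) < dist v" if v: "v \<in> R - {a}" for v
  proof -
    have "v \<in> R" "a \<noteq> v"
      using v by auto
    then obtain w where w: "1 \<le> dist v" "reach_within E (dist v - 1) a w" "{w, v} \<in> E"
      by (rule reach_within_last_edge[OF dist])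
    have "dist w \<le> dist v - 1"
      using w(2) unfolding dist_def by (rule Least_le)
    then have "\<exists>w. {w, v} \<in> E \<and> dist w < dist v"
      using w by force
    then show ?thesis
      unfolding parent_def by (rule someI_ex)
  qed
  have "inj_on (\<lambda>v. {v, parent v}) (R - {a})"
  proof (rule inj_on_edge_to_parent)
    fix v
    assume "v \<in> R - {a}" "parent v \<in> R - {a}"
    then have "dist (parent (parent v)) < dist v"
      using parent by (meson order.strict_trans)
    then show "parent (parent v) \<noteq> v"
      by auto
  qed
  then have "inj_on (\<lambda>v. {parent v, v}) (R - {a})"
    by (simp add: insert_commute)
  moreover have "(\<lambda>v. {parent v, v}) ` (R - {a}) \<subseteq> E"
    using parent by blast
  ultimately have card_R: "card (R - {a}) \<le> card E"
    using assms(1) by (rule card_inj_on_le)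
  have "R \<subseteq> insert a (\<Union>E)"
    using parent by blast
  moreover have "finite (insert a (\<Union>E))"
    using assms by simp
  ultimately have fin_R: "finite R"
    by (rule finite_subset)
  have "a \<in> R"
    unfolding R_def using reach_within_refl by blast
  with fin_R have "card R = Suc (card (R - {a}))"
    by (rule card.remove)
  with fin_R card_R show "finite {v. \<exists>k. reach_within E k a v}" "card {v. \<exists>k. reach_within E k a v} \<le> card E + 1"
    by (simp_all add: R_def)
qed

lemma ex_unreachable_if_card_gt:
  assumes "finite E" "\<And>e. e \<in> E \<Longrightarrow> finite e" "finite S" "card E + 1 < card S"
  obtains d where "d \<in> S" "\<not> (\<exists>k. reach_within E k a d)"
proof -
  have "\<not> S \<subseteq> {v. \<exists>k. reach_within E k a v}"
  proof
    assume "S \<subseteq> {v. \<exists>k. reach_within E k a v}"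
    then have "card S \<le> card {v. \<exists>k. reach_within E k a v}"
      using card_reachable_le(1)[OF assms(1,2)] by (rule card_mono[rotated])
    then show False
      using card_reachable_le(2)[OF assms(1,2), of a] assms(4) by simp
  qed
  then show thesis
    using that by blast
qed

lemma convex_hull_doubleton: "convex hull {p, q} = closed_segment p q"
  by (simp add: segment_convex_hull)

lemma finite_complete_edges: "finite V \<Longrightarrow> finite (complete_edges V)"
  unfolding complete_edges_def by (rule finite_subset[of _ "Pow V"]) auto

definition star_edges :: "pt set \<Rightarrow> pt \<Rightarrow> pt set set" where
  "star_edges V b = (\<lambda>v. {b, v}) ` (V - {b})"

lemma star_edges_in_trees_le:
  assumes "finite V" "general_position V" "b \<in> V" "2 \<le> k"
  shows "star_edges V b \<in> trees_le V k"
proof -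
  let ?S = "star_edges V b"
  have "inj_on (\<lambda>v. {b, v}) (V - {b})"
    by (auto simp: inj_on_def doubleton_eq_iff)
  then have card: "card ?S = card V - 1"
    using assms(1,3) by (simp add: star_edges_def card_image)
  have to_b: "reach_within ?S 1 u b" if "u \<in> V" for u
  proof (cases "u = b")
    case False
    then have "{u, b} \<in> ?S"
      using that by (auto simp: star_edges_def insert_commute)
    then show ?thesis
      by (rule reach_within_edge)
  qed (simp add: reach_within_refl)
  have reach: "reach_within ?S k u v" if "u \<in> V" "v \<in> V" for u v
  proof -
    have "reach_within ?S (1 + 1) u v"
      using reach_within_trans[OF to_b[OF that(1)] reach_within_sym[OF to_b[OF that(2)]]] .
    then show ?thesis
      by (rule reach_within_mono) (use assms(4) in simp)
  qed
  have "noncrossing ?S"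
    unfolding noncrossing_def
  proof (intro ballI impI)
    fix e f
    assume "e \<in> ?S" "f \<in> ?S" "e \<noteq> f"
    then obtain u v where uv: "e = {b, u}" "f = {b, v}" "u \<in> V" "v \<in> V" "u \<noteq> b" "v \<noteq> b" "u \<noteq> v"
      by (auto simp: star_edges_def)
    then have "\<not> collinear {b, u, v}"
      by (intro general_position_noncollinear[OF assms(2,3)]) auto
    then show "convex hull e \<inter> convex hull f \<subseteq> e \<inter> f"
      using uv(1,2) by (simp add: convex_hull_doubleton closed_segment_Int_common_endpoint)
  qed
  moreover have "?S \<subseteq> complete_edges V"
    using assms(3) by (auto simp: star_edges_def complete_edges_def)
  moreover have "graph_connected V ?S" "diam_le V ?S k"
    unfolding graph_connected_def diam_le_def using reach by blast+
  ultimately show ?thesis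
    unfolding trees_le_def spanning_tree_def using card by blast
qed

lemma spanning_tree_Int_star_edges:
  assumes "spanning_tree V T" "a \<in> V" "b \<in> V" "a \<noteq> b"
  shows "T \<inter> star_edges V b \<noteq> {}"
proof -
  obtain k where "reach_within T k a b"
    using assms unfolding spanning_tree_def graph_connected_def by blast
  then obtain w where "1 \<le> k" "reach_within T (k - 1) a w" and w: "{w, b} \<in> T"
    by (rule reach_within_last_edge[OF _ assms(4)])
  then have "w \<in> V" "w \<noteq> b"
    using assms(1) unfolding spanning_tree_def complete_edges_def by (auto simp: doubleton_eq_iff)
  then show ?thesis
    using w by (auto simp: star_edges_def insert_commute)
qed

lemma blocks_star_edges:
  assumes "a \<in> V" "b \<in> V" "a \<noteq> b"
  shows "blocks (star_edges V b) (trees_le V k)"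
  unfolding blocks_def trees_le_def
  using spanning_tree_Int_star_edges[OF _ assms] by (simp add: Int_commute)

lemma finite_blocker:
  assumes "finite V" "is_blocker V F B"
  shows "finite B"
  using finite_complete_edges[OF assms(1)] assms(2) unfolding is_blocker_def
  by (auto intro: finite_subset)

lemma blocker_card_le:
  assumes "finite V" "general_position V" "is_blocker V (trees_le V k) B"
    and "a \<in> V" "b \<in> V" "a \<noteq> b" "2 \<le> k"
  shows "card B \<le> card V - 1"
proof -
  have "star_edges V b \<in> trees_le V k"
    using assms(1,2,5,7) by (rule star_edges_in_trees_le)
  then have "star_edges V b \<subseteq> complete_edges V" and card: "card (star_edges V b) = card V - 1"
    unfolding trees_le_def spanning_tree_def by auto
  with blocks_star_edges[OF assms(4-6)] assms(3) have "card B \<le> card (star_edges V b)"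
    unfolding is_blocker_def by blast
  then show ?thesis
    using card by simp
qed

lemma card_eq_card_avoiding_plus_degree:
  assumes "finite B"
  shows "card B = card {e \<in> B. b \<notin> e} + degree B b"
proof -
  have "B = {e \<in> B. b \<notin> e} \<union> {e \<in> B. b \<in> e}"
    by auto
  then show ?thesis
    using assms unfolding degree_def by (metis (no_types, lifting) card_Un_disjoint disjoint_iff
        finite_Un mem_Collect_eq)
qed

lemma degree_blocker_pos:
  assumes "finite V" "general_position V" "is_blocker V (trees_le V k) B"
    and "b \<in> V" "2 \<le> k"
  shows "0 < degree B b"
proof -
  have "star_edges V b \<in> trees_le V k"
    using assms(1,2,4,5) by (rule star_edges_in_trees_le)
  then have "B \<inter> star_edges V b \<noteq> {}"
    using assms(3) unfolding is_blocker_def blocks_def by blast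
  then obtain e where "e \<in> B" "b \<in> e"
    by (auto simp: star_edges_def)
  moreover have "finite B"
    using assms(1,3) by (rule finite_blocker)
  ultimately show ?thesis
    unfolding degree_def by (auto simp: card_gt_0_iff)
qed

section \<open>Angular order around an endpoint of a boundary edge\<close>

lemma supporting_hyperplane_frontier:
  fixes S :: "'a::euclidean_space set"
  assumes "convex S" "closed S" "m \<in> frontier S"
  obtains l where "l \<noteq> 0" "\<And>y. y \<in> S \<Longrightarrow> l \<bullet> m \<le> l \<bullet> y"
proof -
  have m: "m \<in> S"
    using assms(2,3) by (simp add: frontier_def closure_closed)
  show thesis
  proof (cases "interior S = {}")
    case True
    then obtain l c where l: "l \<noteq> 0" "S \<subseteq> {x. l \<bullet> x = c}"
      using empty_interior_subset_hyperplane[OF assms(1)] by blast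
    have on_line: "l \<bullet> y = c" if "y \<in> S" for y
      using l(2) that by blast
    show thesis
      by (rule that[OF l(1)]) (simp add: on_line m)
  next
    case False
    then have "m \<notin> rel_interior S"
      using assms(3) by (simp add: frontier_def rel_interior_nonempty_interior)
    with assms(1) m show thesis
      by (rule supporting_hyperplane_rel_boundary) (rule that)
  qed
qed

text \<open>A supporting line of the hull at the midpoint of \<open>ab\<close> must contain \<open>a\<close> and \<open>b\<close>, and general
  position keeps every other vertex off it.\<close>

lemma boundary_edge_supporting_line:
  assumes "finite V" "general_position V" "boundary_edge V a b"
  obtains l where "l \<noteq> 0" "l \<bullet> (b - a) = 0" "\<And>y. y \<in> V - {a, b} \<Longrightarrow> 0 < l \<bullet> (y - a)"
proof -
  have a: "a \<in> V" and b: "b \<in> V" and "a \<noteq> b"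
    and seg: "closed_segment a b \<subseteq> frontier (convex hull V)"
    using assms(3) unfolding boundary_edge_def by auto
  have "convex (convex hull V)" "closed (convex hull V)"
    using assms(1) by (simp_all add: compact_imp_closed finite_imp_compact_convex_hull)
  moreover have "midpoint a b \<in> frontier (convex hull V)"
    using seg by (simp add: subset_iff)
  ultimately obtain l where "l \<noteq> 0" and supp: "\<And>y. y \<in> convex hull V \<Longrightarrow> l \<bullet> midpoint a b \<le> l \<bullet> y"
    by (rule supporting_hyperplane_frontier) (rule that)
  have la: "l \<bullet> a = l \<bullet> midpoint a b" and "l \<bullet> b = l \<bullet> midpoint a b"
    using supp[OF hull_inc[OF a]] supp[OF hull_inc[OF b]]
    by (auto simp: midpoint_def inner_add_right)
  then have lba: "l \<bullet> (b - a) = 0"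
    by (simp add: inner_diff_right)
  have "0 < l \<bullet> (y - a)" if y: "y \<in> V - {a, b}" for y
  proof -
    have "0 \<le> l \<bullet> (y - a)"
      using supp[OF hull_inc, of y] y la by (simp add: inner_diff_right)
    moreover have "l \<bullet> (y - a) \<noteq> 0"
    proof
      assume "l \<bullet> (y - a) = 0"
      then have "(l \<bullet> l) * det2 (b - a) (y - a) = 0"
        using inner_self_mult_det2[of l "b - a" "y - a"] lba by simp
      then have "collinear {a, b, y}"
        using \<open>l \<noteq> 0\<close> by (simp add: collinear_if_det2_eq_0)
      moreover have "\<not> collinear {a, b, y}"
        using general_position_noncollinear[OF assms(2) a b] y \<open>a \<noteq> b\<close> by blast
      ultimately show False
        by simp
    qed
    ultimately show ?thesis
      by simp
  qed
  with \<open>l \<noteq> 0\<close> lba show thesis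
    by (rule that)
qed

lemma boundary_edge_one_side:
  assumes "finite V" "general_position V" "boundary_edge V a b"
  obtains K where "\<And>y. y \<in> V - {a, b} \<Longrightarrow> 0 < K * det2 (b - a) (y - a)"
proof -
  obtain l where l: "l \<noteq> 0" "l \<bullet> (b - a) = 0" "\<And>y. y \<in> V - {a, b} \<Longrightarrow> 0 < l \<bullet> (y - a)"
    by (rule boundary_edge_supporting_line[OF assms]) (rule that)
  have "b - a \<noteq> 0"
    using assms(3) unfolding boundary_edge_def by auto
  show thesis
  proof (rule that[of "det2 (b - a) l"])
    fix y
    assume "y \<in> V - {a, b}"
    then show "0 < det2 (b - a) l * det2 (b - a) (y - a)"
      using det2_mult_det2[of "b - a" l "y - a"] l(2) l(3)[of y] \<open>b - a \<noteq> 0\<close> by simp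
  qed
qed

text \<open>Seen from \<open>a\<close>, the points of \<open>W\<close> lie in an open half-plane, so \<open>0 < turn p q\<close> orders
  them by angle and \<open>angle_rank\<close> is the position in this order.\<close>

locale one_sided_edge =
  fixes V :: "pt set" and a b :: pt and K :: real
  assumes finite_V: "finite V" and general_position_V: "general_position V"
    and a_in_V: "a \<in> V" and b_in_V: "b \<in> V" and a_neq_b: "a \<noteq> b"
    and one_side: "\<And>y. y \<in> V - {a, b} \<Longrightarrow> 0 < K * det2 (b - a) (y - a)"
begin

abbreviation W :: "pt set" where
  "W \<equiv> V - {a, b}"

definition turn :: "pt \<Rightarrow> pt \<Rightarrow> real" where
  "turn p q = K * det2 (p - a) (q - a)"

definition angle_rank :: "pt \<Rightarrow> nat" where
  "angle_rank p = card {q \<in> W. 0 < turn q p}"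

lemma angle_rank_le_card: "angle_rank p \<le> card W"
  unfolding angle_rank_def using finite_V by (intro card_mono) auto

lemma turn_antisym: "turn p q = - turn q p"
  unfolding turn_def using det2_antisym[of "p - a" "q - a"] by simp

lemma turn_self [simp]: "turn p p = 0"
  and turn_a_right [simp]: "turn p a = 0"
  unfolding turn_def by simp_all

lemma turn_b_pos: "y \<in> W \<Longrightarrow> 0 < turn b y"
  unfolding turn_def by (rule one_side)

lemma turn_neq_0:
  assumes "p \<in> W" "q \<in> W" "p \<noteq> q"
  shows "turn p q \<noteq> 0"
proof -
  have "K \<noteq> 0"
    using one_side[OF assms(1)] by auto
  moreover have "\<not> collinear {a, p, q}"
    using general_position_noncollinear[OF general_position_V a_in_V, of p q] assms by auto
  then have "det2 (p - a) (q - a) \<noteq> 0"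
    using collinear_if_det2_eq_0 by blast
  ultimately show ?thesis
    unfolding turn_def by simp
qed

text \<open>The turns of three points, weighted by their heights above the line \<open>ab\<close>, sum to zero;
  since the heights are positive, turning left is transitive on \<open>W\<close>.\<close>

lemma turn_trans:
  assumes "p \<in> W" "q \<in> W" "r \<in> W" "0 < turn p q" "0 < turn q r"
  shows "0 < turn p r"
proof -
  define h where "h y = K * det2 (b - a) (y - a)" for y
  have h: "0 < h p" "0 < h q" "0 < h r"
    using one_side assms(1-3) unfolding h_def by auto
  have "turn p q * h r + turn q r * h p + turn r p * h q
      = K * K * (det2 (p - a) (q - a) * det2 (b - a) (r - a) + det2 (q - a) (r - a) * det2 (b - a) (p - a)
          + det2 (r - a) (p - a) * det2 (b - a) (q - a))"
    unfolding turn_def h_def by (simp add: algebra_simps)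
  also have "\<dots> = 0"
    using det2_cyclic_sum[of "p - a" "q - a" "b - a" "r - a"] by simp
  finally have "turn r p * h q = - (turn p q * h r + turn q r * h p)"
    by simp
  moreover have "0 < turn p q * h r" "0 < turn q r * h p"
    using assms(4,5) h by simp_all
  ultimately have "turn r p * h q < 0"
    by simp
  then have "turn r p < 0"
    using h(2) by (simp add: mult_less_0_iff)
  then show ?thesis
    using turn_antisym[of p r] by simp
qed

lemma angle_rank_less:
  assumes "p \<in> W" "q \<in> W" "0 < turn p q"
  shows "angle_rank p < angle_rank q"
  unfolding angle_rank_def
proof (rule psubset_card_mono)
  show "finite {x \<in> W. 0 < turn x q}"
    using finite_V by simp
  have "{x \<in> W. 0 < turn x p} \<subseteq> {x \<in> W. 0 < turn x q}"
    using turn_trans assms by blast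
  moreover have "p \<in> {x \<in> W. 0 < turn x q} - {x \<in> W. 0 < turn x p}"
    using assms by simp
  ultimately show "{x \<in> W. 0 < turn x p} \<subset> {x \<in> W. 0 < turn x q}"
    by blast
qed

lemma angle_rank_eq_iff:
  assumes "p \<in> W" "q \<in> W"
  shows "angle_rank p = angle_rank q \<longleftrightarrow> p = q"
  using turn_neq_0[OF assms] turn_antisym[of p q] angle_rank_less[OF assms] angle_rank_less[OF assms(2,1)]
  by (cases "p = q") (auto simp: neq_iff)

lemma turn_pos_iff:
  assumes "p \<in> W" "q \<in> W"
  shows "0 < turn p q \<longleftrightarrow> angle_rank p < angle_rank q"
  using turn_neq_0[OF assms] turn_antisym[of p q] angle_rank_less[OF assms] angle_rank_less[OF assms(2,1)]
  by (cases "p = q") (auto simp: neq_iff)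

lemma turn_neg_iff:
  assumes "p \<in> W" "q \<in> W"
  shows "turn p q < 0 \<longleftrightarrow> angle_rank q < angle_rank p"
  using turn_pos_iff[OF assms(2,1)] turn_antisym[of p q] by linarith

lemma turn_closed_segment:
  assumes "z \<in> closed_segment p q"
  shows "turn x z \<in> closed_segment (turn x p) (turn x q)"
proof -
  obtain u where u: "0 \<le> u" "u \<le> 1" "z = (1 - u) *\<^sub>R p + u *\<^sub>R q"
    using assms unfolding in_segment(1) by blast
  have "turn x z = (1 - u) * turn x p + u * turn x q"
    unfolding turn_def u(3) det2_affine_right by (simp add: algebra_simps)
  then show ?thesis
    using u(1,2) unfolding in_segment(1) by auto
qed

lemma turn_closed_segment_from_a:
  assumes "z \<in> closed_segment a x"
  shows "turn x z = 0"
  using turn_closed_segment[OF assms, of x] by simp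

text \<open>Segments whose endpoints are separated in the angular order around \<open>a\<close> are separated by
  the ray from \<open>a\<close> through the first endpoint of the later one.\<close>

lemma closed_segments_disjoint_if_angle_separated:
  assumes "p \<in> W" "q \<in> W" "p' \<in> W" "q' \<in> W"
    and "max (angle_rank p) (angle_rank q) < min (angle_rank p') (angle_rank q')"
  shows "closed_segment p q \<inter> closed_segment p' q' = {}"
proof -
  have *: "z \<notin> closed_segment p' q'"
    if "p' \<in> W" "q' \<in> W" "angle_rank p' \<le> angle_rank q'"
      "max (angle_rank p) (angle_rank q) < angle_rank p'" "z \<in> closed_segment p q" for p' q' z
  proof
    assume z': "z \<in> closed_segment p' q'"
    have "turn p' p < 0" "turn p' q < 0"
      using that(1,4) assms(1,2) by (simp_all add: turn_neg_iff)
    then have "turn p' z < 0"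
      using turn_closed_segment[OF that(5), of p'] by (auto simp: closed_segment_eq_real_ivl split: if_splits)
    moreover have "0 \<le> turn p' q'"
      using that(1-3) turn_pos_iff[OF that(1,2)] angle_rank_eq_iff[OF that(1,2)] by force
    then have "0 \<le> turn p' z"
      using turn_closed_segment[OF z', of p'] by (auto simp: closed_segment_eq_real_ivl split: if_splits)
    ultimately show False
      by simp
  qed
  show ?thesis
  proof (cases "angle_rank p' \<le> angle_rank q'")
    case True
    then show ?thesis
      using *[of p' q'] assms by auto
  next
    case False
    then show ?thesis
      using *[of q' p'] assms by (auto simp: closed_segment_commute)
  qed
qed

end

section \<open>The fan tree\<close>

locale fan = one_sided_edge +
  fixes D :: "pt set"
  assumes D_subset_W: "D \<subseteq> W" and D_nonempty: "D \<noteq> {}"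
begin

text \<open>No vertex of \<open>D\<close> lies angularly strictly between \<open>c\<close> and \<open>anchor c\<close>; this is what keeps
  the edges to anchors from crossing each other and the edges \<open>ad\<close>.\<close>

definition anchor :: "pt \<Rightarrow> pt" where
  "anchor c = (if \<exists>d\<in>D. angle_rank c < angle_rank d
     then arg_min_on angle_rank {d \<in> D. angle_rank c < angle_rank d}
     else arg_max angle_rank (\<lambda>d. d \<in> D))"

lemma finite_D: "finite D"
  using D_subset_W finite_V by (auto intro: finite_subset)

lemma arg_max_angle_rank:
  "arg_max angle_rank (\<lambda>d. d \<in> D) \<in> D \<and> (\<forall>d\<in>D. angle_rank d \<le> angle_rank (arg_max angle_rank (\<lambda>d. d \<in> D)))"
proof -
  obtain d where "d \<in> D"
    using D_nonempty by blast
  moreover have "\<forall>y. y \<in> D \<longrightarrow> angle_rank y < Suc (card W)"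
    using angle_rank_le_card by (simp add: less_Suc_eq_le)
  ultimately show ?thesis
    using arg_max_nat_lemma[of "\<lambda>d. d \<in> D" d angle_rank] by blast
qed

lemma anchor_in_D: "anchor c \<in> D"
proof (cases "\<exists>d\<in>D. angle_rank c < angle_rank d")
  case True
  then have "arg_min_on angle_rank {d \<in> D. angle_rank c < angle_rank d} \<in> {d \<in> D. angle_rank c < angle_rank d}"
    using finite_D by (intro arg_min_if_finite(1)) auto
  then show ?thesis
    using True by (simp add: anchor_def)
next
  case False
  then show ?thesis
    using arg_max_angle_rank by (simp add: anchor_def)
qed

lemma anchor_in_W: "anchor c \<in> W"
  using anchor_in_D D_subset_W by blast

lemma anchor_cases:
  assumes "c \<in> W - D"
  obtains (before) "angle_rank c < angle_rank (anchor c)"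
      "\<And>d. d \<in> D \<Longrightarrow> angle_rank c < angle_rank d \<Longrightarrow> angle_rank (anchor c) \<le> angle_rank d"
    | (after) "\<And>d. d \<in> D \<Longrightarrow> angle_rank d \<le> angle_rank (anchor c)"
      "\<And>d. d \<in> D \<Longrightarrow> angle_rank d < angle_rank c"
proof (cases "\<exists>d\<in>D. angle_rank c < angle_rank d")
  case True
  let ?U = "{d \<in> D. angle_rank c < angle_rank d}"
  have "anchor c = arg_min_on angle_rank ?U"
    using True by (simp add: anchor_def)
  moreover have "arg_min_on angle_rank ?U \<in> ?U"
    using True finite_D by (intro arg_min_if_finite(1)) auto
  moreover have "angle_rank (arg_min_on angle_rank ?U) \<le> angle_rank d" if "d \<in> ?U" for d
    using True finite_D that by (intro arg_min_least) auto
  ultimately show thesis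
    using before by simp
next
  case False
  have "angle_rank d < angle_rank c" if "d \<in> D" for d
  proof -
    have "d \<noteq> c"
      using assms that by blast
    then have "angle_rank d \<noteq> angle_rank c"
      using angle_rank_eq_iff assms that D_subset_W by blast
    then show ?thesis
      using False that by auto
  qed
  moreover have "anchor c = arg_max angle_rank (\<lambda>d. d \<in> D)"
    using False by (simp add: anchor_def)
  ultimately show thesis
    using after arg_max_angle_rank by simp
qed

lemma angle_rank_outside_anchor_interval:
  assumes "c \<in> W - D" "d \<in> D" "d \<noteq> anchor c"
  shows "angle_rank d < angle_rank c \<and> angle_rank d < angle_rank (anchor c)
    \<or> angle_rank c < angle_rank d \<and> angle_rank (anchor c) < angle_rank d"
proof -
  have "d \<in> W" "d \<noteq> c"
    using assms D_subset_W by auto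
  then have ne: "angle_rank d \<noteq> angle_rank c" "angle_rank d \<noteq> angle_rank (anchor c)"
    using angle_rank_eq_iff assms anchor_in_W by auto
  from assms(1) show ?thesis
  proof (cases rule: anchor_cases)
    case before
    show ?thesis
    proof (cases "angle_rank c < angle_rank d")
      case True
      with before(2)[OF assms(2)] ne show ?thesis
        by linarith
    next
      case False
      with before(1) ne show ?thesis
        by linarith
    qed
  next
    case after
    with ne show ?thesis
      using after(1)[OF assms(2)] after(2)[OF assms(2)] by linarith
  qed
qed

lemma anchor_intervals_separated:
  assumes "c \<in> W - D" "c' \<in> W - D" "anchor c \<noteq> anchor c'"
  shows "max (angle_rank c) (angle_rank (anchor c)) < min (angle_rank c') (angle_rank (anchor c'))
    \<or> max (angle_rank c') (angle_rank (anchor c')) < min (angle_rank c) (angle_rank (anchor c))"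
proof -
  have ne: "angle_rank (anchor c) \<noteq> angle_rank (anchor c')"
    using assms(3) angle_rank_eq_iff anchor_in_W by blast
  note out = angle_rank_outside_anchor_interval[OF assms(1) anchor_in_D assms(3)[symmetric]]
    angle_rank_outside_anchor_interval[OF assms(2) anchor_in_D assms(3)]
  from assms(1) show ?thesis
  proof (cases rule: anchor_cases)
    case before
    from assms(2) show ?thesis
    proof (cases rule: anchor_cases)
      case before
      then show ?thesis
        using out ne \<open>angle_rank c < angle_rank (anchor c)\<close> by auto
    next
      case after
      then show ?thesis
        using out ne after(1,2)[OF anchor_in_D[of c]] \<open>angle_rank c < angle_rank (anchor c)\<close> by auto
    qed
  next
    case after
    from assms(2) show ?thesis
    proof (cases rule: anchor_cases)
      case before
      then show ?thesis
        using out ne after(1,2)[OF anchor_in_D[of c']] by auto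
    next
      case after': after
      then show ?thesis
        using ne after(1)[OF anchor_in_D[of c']] after'(1)[OF anchor_in_D[of c]] by simp
    qed
  qed
qed

lemma closed_segment_ab_Int_ad:
  assumes "d \<in> D"
  shows "closed_segment a b \<inter> closed_segment a d = {a}"
proof (rule closed_segment_Int_common_endpoint)
  show "\<not> collinear {a, b, d}"
    using general_position_noncollinear[OF general_position_V a_in_V b_in_V, of d] assms D_subset_W
      a_neq_b by auto
qed

lemma closed_segment_ad_Int_ad:
  assumes "d \<in> D" "d' \<in> D" "d \<noteq> d'"
  shows "closed_segment a d \<inter> closed_segment a d' = {a}"
proof (rule closed_segment_Int_common_endpoint)
  show "\<not> collinear {a, d, d'}"
    using general_position_noncollinear[OF general_position_V a_in_V, of d d'] assms D_subset_W by auto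
qed

lemma closed_segment_ab_Int_anchor:
  assumes "c \<in> W - D"
  shows "closed_segment a b \<inter> closed_segment c (anchor c) = {}"
proof -
  have "0 < turn b z" if "z \<in> closed_segment c (anchor c)" for z
    using turn_closed_segment[OF that, of b] turn_b_pos[of c] turn_b_pos[OF anchor_in_W[of c]] assms
    by (auto simp: closed_segment_eq_real_ivl split: if_splits)
  then show ?thesis
    using turn_closed_segment_from_a by force
qed

lemma closed_segment_ad_Int_anchor:
  assumes "d \<in> D" "c \<in> W - D"
  shows "closed_segment a d \<inter> closed_segment c (anchor c) = (if d = anchor c then {d} else {})"
proof (cases "d = anchor c")
  case True
  have "closed_segment d a \<inter> closed_segment d c = {d}"
  proof (rule closed_segment_Int_common_endpoint)
    show "\<not> collinear {d, a, c}"
      using general_position_noncollinear[OF general_position_V, of d a c] assms D_subset_W a_in_V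
      by auto
  qed
  then show ?thesis
    using True by (simp add: closed_segment_commute)
next
  case False
  have "d \<in> W"
    using assms(1) D_subset_W by blast
  have W: "c \<in> W" "anchor c \<in> W"
    using assms(2) anchor_in_W by auto
  have "0 < turn d c \<and> 0 < turn d (anchor c) \<or> turn d c < 0 \<and> turn d (anchor c) < 0"
    using angle_rank_outside_anchor_interval[OF assms(2,1) False]
    unfolding turn_pos_iff[OF \<open>d \<in> W\<close> W(1)] turn_pos_iff[OF \<open>d \<in> W\<close> W(2)]
      turn_neg_iff[OF \<open>d \<in> W\<close> W(1)] turn_neg_iff[OF \<open>d \<in> W\<close> W(2)]
    by blast
  then have "turn d z \<noteq> 0" if "z \<in> closed_segment c (anchor c)" for z
    using turn_closed_segment[OF that, of d] by (auto simp: closed_segment_eq_real_ivl split: if_splits)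
  then show ?thesis
    using False turn_closed_segment_from_a by force
qed

lemma closed_segment_anchor_Int_anchor:
  assumes "c \<in> W - D" "c' \<in> W - D" "c \<noteq> c'"
  shows "closed_segment c (anchor c) \<inter> closed_segment c' (anchor c')
    = (if anchor c = anchor c' then {anchor c} else {})"
proof (cases "anchor c = anchor c'")
  case True
  have "anchor c \<noteq> c" "anchor c \<noteq> c'" "anchor c \<in> W"
    using anchor_in_D[of c] anchor_in_W[of c] assms by auto
  then have "closed_segment (anchor c) c \<inter> closed_segment (anchor c) c' = {anchor c}"
    using general_position_noncollinear[OF general_position_V, of "anchor c" c c'] assms
    by (intro closed_segment_Int_common_endpoint) auto
  then show ?thesis
    using True by (simp add: closed_segment_commute)
next
  case False
  have W: "c \<in> W" "c' \<in> W" "anchor c \<in> W" "anchor c' \<in> W"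
    using assms anchor_in_W by auto
  from anchor_intervals_separated[OF assms(1,2) False] show ?thesis
  proof
    assume "max (angle_rank c) (angle_rank (anchor c)) < min (angle_rank c') (angle_rank (anchor c'))"
    then have "closed_segment c (anchor c) \<inter> closed_segment c' (anchor c') = {}"
      by (rule closed_segments_disjoint_if_angle_separated[OF W(1,3,2,4)])
    with False show ?thesis
      by simp
  next
    assume "max (angle_rank c') (angle_rank (anchor c')) < min (angle_rank c) (angle_rank (anchor c))"
    then have "closed_segment c' (anchor c') \<inter> closed_segment c (anchor c) = {}"
      by (rule closed_segments_disjoint_if_angle_separated[OF W(2,4,1,3)])
    with False show ?thesis
      by (simp add: Int_commute)
  qed
qed

definition parent :: "pt \<Rightarrow> pt" where
  "parent v = (if v \<in> W - D then anchor v else a)"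

definition fan_tree :: "pt set set" where
  "fan_tree = (\<lambda>v. {v, parent v}) ` (V - {a})"

lemma fan_tree_cases:
  assumes "e \<in> fan_tree"
  obtains "e = {a, b}"
    | d where "d \<in> D" "e = {a, d}"
    | c where "c \<in> W - D" "e = {c, anchor c}"
proof -
  obtain v where v: "v \<in> V - {a}" "e = {v, parent v}"
    using assms unfolding fan_tree_def by blast
  consider "v = b" | "v \<in> D" | "v \<in> W - D"
    using v(1) by blast
  then show thesis
  proof cases
    case 1
    then show thesis
      using that(1) v(2) by (simp add: parent_def insert_commute)
  next
    case 2
    then show thesis
      using that(2) v(2) by (simp add: parent_def insert_commute)
  next
    case 3
    then show thesis
      using that(3) v(2) by (simp add: parent_def)
  qed
qed

lemma fan_tree_edge_into_D:
  assumes "e \<in> fan_tree" "e \<noteq> {a, b}"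
  shows "\<exists>x\<in>insert a (W - D). \<exists>d\<in>D. e = {x, d}"
  using assms(1)
proof (cases rule: fan_tree_cases)
  case 1
  then show ?thesis
    using assms(2) by simp
next
  case (2 d)
  then show ?thesis
    by blast
next
  case (3 c)
  then show ?thesis
    using anchor_in_D by blast
qed

lemma parent_parent: "v \<in> V \<Longrightarrow> parent (parent v) = a"
  using anchor_in_D by (auto simp: parent_def)

lemma parent_in_V: "v \<in> V \<Longrightarrow> parent v \<in> V"
  using anchor_in_W a_in_V by (auto simp: parent_def)

lemma parent_neq: "v \<in> V - {a} \<Longrightarrow> parent v \<noteq> v"
  using anchor_in_D[of v] by (auto simp: parent_def)

lemma reach_within_fan_tree: "v \<in> V \<Longrightarrow> reach_within fan_tree 2 v a"
proof -
  have step: "reach_within fan_tree 1 u (parent u)" if "u \<in> V" for u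
  proof (cases "u = a")
    case True
    then show ?thesis
      by (simp add: parent_def reach_within_refl)
  next
    case False
    then have "{u, parent u} \<in> fan_tree"
      using that unfolding fan_tree_def by blast
    then show ?thesis
      by (rule reach_within_edge)
  qed
  assume "v \<in> V"
  then have "reach_within fan_tree (1 + 1) v (parent (parent v))"
    using reach_within_trans step parent_in_V by blast
  then show ?thesis
    using \<open>v \<in> V\<close> parent_parent by (simp add: numeral_2_eq_2)
qed

lemma fan_tree_ab_meets:
  assumes "f \<in> fan_tree" "f \<noteq> {a, b}"
  shows "convex hull {a, b} \<inter> convex hull f \<subseteq> {a, b} \<inter> f"
  using assms(1)
proof (cases rule: fan_tree_cases)
  case (2 d)
  then show ?thesis
    using closed_segment_ab_Int_ad by (simp add: convex_hull_doubleton)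
next
  case (3 c)
  then show ?thesis
    using closed_segment_ab_Int_anchor by (simp add: convex_hull_doubleton)
qed (use assms(2) in simp)

lemma fan_tree_ad_meets:
  assumes "d \<in> D" "f \<in> fan_tree" "f \<noteq> {a, b}" "f \<noteq> {a, d}"
  shows "convex hull {a, d} \<inter> convex hull f \<subseteq> {a, d} \<inter> f"
  using assms(2)
proof (cases rule: fan_tree_cases)
  case (2 d')
  then have "d \<noteq> d'"
    using assms(4) by auto
  then show ?thesis
    using 2 closed_segment_ad_Int_ad[OF assms(1)] by (simp add: convex_hull_doubleton)
next
  case (3 c)
  then show ?thesis
    using closed_segment_ad_Int_anchor[OF assms(1)] by (simp add: convex_hull_doubleton)
qed (use assms(3) in simp)

lemma fan_tree_noncrossing: "noncrossing fan_tree"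
  unfolding noncrossing_def
proof (intro ballI impI)
  fix e f
  assume e: "e \<in> fan_tree" and f: "f \<in> fan_tree" and "e \<noteq> f"
  from e show "convex hull e \<inter> convex hull f \<subseteq> e \<inter> f"
  proof (cases rule: fan_tree_cases)
    case 1
    then show ?thesis
      using fan_tree_ab_meets[OF f] \<open>e \<noteq> f\<close> by simp
  next
    case (2 d)
    then have "e \<noteq> {a, b}"
      using D_subset_W a_neq_b by (auto simp: doubleton_eq_iff)
    show ?thesis
    proof (cases "f = {a, b}")
      case True
      then show ?thesis
        using fan_tree_ab_meets[OF e \<open>e \<noteq> {a, b}\<close>] by (simp add: Int_commute)
    next
      case False
      then show ?thesis
        using fan_tree_ad_meets[OF \<open>d \<in> D\<close> f] 2 \<open>e \<noteq> f\<close> by simp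
    qed
  next
    case (3 c)
    then have "c \<in> e" "c \<notin> insert a D" "c \<noteq> b"
      by auto
    then have "e \<noteq> {a, b}"
      by blast
    from f show ?thesis
    proof (cases rule: fan_tree_cases)
      case 1
      then show ?thesis
        using fan_tree_ab_meets[OF e \<open>e \<noteq> {a, b}\<close>] by (simp add: Int_commute)
    next
      case (2 d)
      moreover have "e \<noteq> {a, d}"
        using \<open>c \<in> e\<close> \<open>c \<notin> insert a D\<close> \<open>d \<in> D\<close> by blast
      ultimately show ?thesis
        using fan_tree_ad_meets[OF \<open>d \<in> D\<close> e \<open>e \<noteq> {a, b}\<close>] by (simp add: Int_commute)
    next
      case (3 c')
      moreover have "c \<noteq> c'"
        using \<open>e = {c, anchor c}\<close> \<open>e \<noteq> f\<close> 3 by auto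
      ultimately show ?thesis
        using \<open>e = {c, anchor c}\<close> closed_segment_anchor_Int_anchor[OF \<open>c \<in> W - D\<close>]
        by (simp add: convex_hull_doubleton)
    qed
  qed
qed

lemma fan_tree_in_trees_le: "fan_tree \<in> trees_le V 4"
proof -
  have "fan_tree \<subseteq> complete_edges V"
    unfolding fan_tree_def complete_edges_def using parent_in_V parent_neq by fastforce
  moreover have "inj_on (\<lambda>v. {v, parent v}) (V - {a})"
    by (rule inj_on_edge_to_parent) (auto simp: parent_parent)
  then have "card fan_tree = card V - 1"
    using finite_V a_in_V by (simp add: fan_tree_def card_image)
  moreover have "reach_within fan_tree 4 u v" if "u \<in> V" "v \<in> V" for u v
    using reach_within_trans[OF reach_within_fan_tree[OF that(1)]
        reach_within_sym[OF reach_within_fan_tree[OF that(2)]]]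
    by simp
  ultimately show ?thesis
    using fan_tree_noncrossing
    unfolding trees_le_def spanning_tree_def graph_connected_def diam_le_def by blast
qed


lemma fan_tree_disjoint:
  assumes "{a, b} \<notin> E" and "\<And>x y. x \<in> insert a (W - D) \<Longrightarrow> y \<in> D \<Longrightarrow> {x, y} \<notin> E"
  shows "E \<inter> fan_tree = {}"
proof -
  have "e \<notin> E" if "e \<in> fan_tree" for e
  proof (cases "e = {a, b}")
    case False
    then show ?thesis
      using fan_tree_edge_into_D[OF that] assms(2) by blast
  qed (use assms(1) in simp)
  then show ?thesis
    by blast
qed
end

lemma degree_blocker_le_1:
  assumes "finite V" "general_position V" "is_blocker V (trees_le V 4) B"
    and "boundary_edge V a b" "{a, b} \<notin> B"
  shows "degree B b \<le> 1"
proof (rule ccontr)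
  assume "\<not> degree B b \<le> 1"
  have ab: "a \<in> V" "b \<in> V" "a \<noteq> b"
    using assms(4) unfolding boundary_edge_def by auto
  have B: "B \<subseteq> complete_edges V" "blocks B (trees_le V 4)" and "finite B"
    using assms(3) finite_blocker[OF assms(1,3)] unfolding is_blocker_def by auto
  define B0 where "B0 = {e \<in> B. b \<notin> e}"
  have "card B0 + 1 < card (V - {b})"
    using card_eq_card_avoiding_plus_degree[OF \<open>finite B\<close>, of b] blocker_card_le[OF assms(1-3) ab]
      \<open>\<not> degree B b \<le> 1\<close> assms(1) ab(2) unfolding B0_def by simp
  moreover have "finite B0" "\<And>e. e \<in> B0 \<Longrightarrow> finite e"
    using \<open>finite B\<close> B(1) unfolding B0_def complete_edges_def by auto
  ultimately obtain d where d: "d \<in> V - {b}" "\<not> (\<exists>k. reach_within B0 k a d)"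
    using assms(1) by (elim ex_unreachable_if_card_gt) auto
  define R where "R = {v. \<exists>k. reach_within B0 k a v}"
  have "a \<in> R"
    unfolding R_def using reach_within_refl by blast
  have R_closed: "y \<in> R" if x: "x \<in> R" and xy: "{x, y} \<in> B0" for x y
  proof -
    obtain k where "reach_within B0 k a x"
      using x unfolding R_def by blast
    then have "reach_within B0 (k + 1) a y"
      using reach_within_edge[OF xy] by (rule reach_within_trans)
    then show ?thesis
      unfolding R_def by blast
  qed
  obtain K where K: "\<And>y. y \<in> V - {a, b} \<Longrightarrow> 0 < K * det2 (b - a) (y - a)"
    using boundary_edge_one_side[OF assms(1,2,4)] by blast
  interpret fan V a b K "V - {a, b} - R"
    by unfold_locales (use assms(1,2) ab d \<open>a \<in> R\<close> K in \<open>auto simp: R_def\<close>)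
  have "B \<inter> fan_tree = {}"
  proof (rule fan_tree_disjoint)
    fix x y
    assume "x \<in> insert a (V - {a, b} - (V - {a, b} - R))" "y \<in> V - {a, b} - R"
    then have "x \<in> R" "y \<notin> R" "b \<notin> {x, y}"
      using \<open>a \<in> R\<close> ab(3) by auto
    then show "{x, y} \<notin> B"
      using R_closed unfolding B0_def by blast
  qed (rule assms(5))
  then show False
    using B(2) fan_tree_in_trees_le unfolding blocks_def by blast
qed

theorem lemma1:
  fixes V :: "pt set" and B :: "pt set set" and a b c :: pt
  assumes "finite V" and "general_position V"
    and "is_blocker V (trees_le V 4) B"
    and "boundary_vertex V b"
    and "a \<noteq> c"
    and "boundary_edge V a b" and "boundary_edge V b c"
    and "{a, b} \<notin> B \<or> {b, c} \<notin> B"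
  shows "degree B b = 1"
proof -
  have "boundary_edge V c b"
    using assms(7) unfolding boundary_edge_def by (auto simp: closed_segment_commute)
  then have "degree B b \<le> 1"
    using assms(8) degree_blocker_le_1[OF assms(1-3)] assms(6) by (auto simp: insert_commute)
  moreover have "0 < degree B b"
    using degree_blocker_pos[OF assms(1-3)] assms(4) by (simp add: boundary_vertex_def)
  ultimately show ?thesis
    by simp
qed

end
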